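(* Let $\Bbbk$ be a field and $f(t)=1+\sum_{k\ge1}a_kt^k\in\Bbbk[[t]]$, with $a_0=1$. Write $\frac1{f(t)}=\sum_{k\ge0}D_k(f)t^k$. Let $P_{f,k}(t)=(-1)^k\det\begin{pmatrix} 1&a_1t&\ldots &a_kt^k\\ 1&a_1&\ldots &a_k\\ 0&1&\ldots &a_{k-1}\\ \vdots&\ddots&\ddots&\vdots\\ 0&\ldots &1&a_1 \end{pmatrix}$ for $k\ge1$, $P_{f,0}=1$. Then: (a) $P_{f,k}(t)=\sum_{j=0}^k a_jD_{k-j}(f)\,t^j$ for all $k\ge0$; (b) for any $\Bbbk$-algebra $\mathcal A$ and $x,y\in\mathcal A$, $f(x)\,y\,f(x)^{-1}=y+z_1+z_2+\cdots$, where $z_k=\sum_{i=0}^k a_iD_{k-i}(f)\,x^iyx^{k-i}$ for $k\ge1$.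
   Context: $D_k(f)$ equals $(-1)^k\det$ of the $k\times k$ Toeplitz matrix with first row $(a_1,\dots,a_k)$, and row $r\ge2$ having zeros in its first $r-2$ entries, $1$ in entry $r-1$, then $a_1,a_2,\dots$; $D_0(f)=1$. In (b) the infinite sum is understood formally, e.g. replacing $x$ by $\tau x$ for a formal variable $\tau$ and reading the identity in $\mathcal A[[\tau]]$. *)

theory Defs
  imports "Jordan_Normal_Form.Determinant"
          "HOL-Computational_Algebra.Formal_Power_Series"
begin

definition D :: "'a::field fps \<Rightarrow> nat \<Rightarrow> 'a" where
  "D f k = fps_nth (inverse f) k"

text \<open>The (k+1)x(k+1) matrix of the paper (rows/columns indexed from 0):
  row 0 is (1, a_1 t, ..., a_k t^k); row r \<ge> 1 has zeros in columns j < r-1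
  and a_(j-r+1) in column j \<ge> r-1 (so row 1 is (1, a_1, ..., a_k)).\<close>
definition P_mat :: "'a::field fps \<Rightarrow> nat \<Rightarrow> 'a poly mat" where
  "P_mat f k = mat (k+1) (k+1) (\<lambda>(r, j).
      if r = 0 then monom (fps_nth f j) j
      else if r - 1 \<le> j then [: fps_nth f (j + 1 - r) :] else 0)"

definition P :: "'a::field fps \<Rightarrow> nat \<Rightarrow> 'a poly" where
  "P f k = (if k = 0 then 1 else (-1) ^ k * det (P_mat f k))"

text \<open>phi : k \<rightarrow> A is the structure map making the ring A a (unital, associative)
  k-algebra: a unital ring homomorphism with central image.\<close>
definition algebra_map :: "('a::field \<Rightarrow> 'b::ring_1) \<Rightarrow> bool" where
  "algebra_map \<phi> \<longleftrightarrow> \<phi> 1 = 1 \<and> (\<forall>a b. \<phi> (a + b) = \<phi> a + \<phi> b)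
     \<and> (\<forall>a b. \<phi> (a * b) = \<phi> a * \<phi> b) \<and> (\<forall>a z. \<phi> a * z = z * \<phi> a)"

text \<open>f(\<tau> x) in A[[\<tau>]], with scalar multiplication c\<cdot>u written \<phi> c * u.\<close>
definition subst_fps :: "('a::field \<Rightarrow> 'b::ring_1) \<Rightarrow> 'a fps \<Rightarrow> 'b \<Rightarrow> 'b fps" where
  "subst_fps \<phi> f x = Abs_fps (\<lambda>k. \<phi> (fps_nth f k) * x ^ k)"

end

theory Submission
  imports Defs
begin

text \<open>Part (a): multiplying the matrix of P f k on the right by the unitriangular Toeplitz
  matrix of the coefficients D f 0, ..., D f k turns every row r \<ge> 1 into the unit vector
  e_(r-1) (because f \<cdot> (1/f) = 1), while the first row becomes the polynomials
  \<Sum>_(i\<le>j) a_i D_(j-i) t^i; expanding along the last column leaves only its top entry.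
  Part (b): substituting x into power series is multiplicative over a k-algebra, so
  f(x)^(-1) is 1/f substituted at x, and the coefficients of f(x) y f(x)^(-1) are Cauchy
  products of the coefficients of f and 1/f with the central scalars pulled to the front.\<close>

lemma convolution_coeff_D:
  fixes f :: "'a::field fps"
  assumes "fps_nth f 0 = 1"
  shows "(\<Sum>i\<le>n. fps_nth f i * D f (n - i)) = (if n = 0 then 1 else 0)"
proof -
  have "f * inverse f = 1" by (rule inverse_mult_eq_1') (simp add: assms)
  then have "fps_nth (f * inverse f) n = (if n = 0 then 1 else 0)" by simp
  then show ?thesis by (simp add: fps_mult_nth D_def atLeast0AtMost)
qed

lemma D_0: "fps_nth f 0 = 1 \<Longrightarrow> D f 0 = 1"
  using convolution_coeff_D[of f 0] by simp

definition D_mat :: "'a::field fps \<Rightarrow> nat \<Rightarrow> 'a poly mat" where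
  "D_mat f k = mat (k+1) (k+1) (\<lambda>(i, j). if i \<le> j then [:D f (j - i):] else 0)"

definition P_poly :: "'a::field fps \<Rightarrow> nat \<Rightarrow> 'a poly" where
  "P_poly f k = (\<Sum>i\<le>k. monom (fps_nth f i * D f (k - i)) i)"

definition P_mat_reduced :: "'a::field fps \<Rightarrow> nat \<Rightarrow> 'a poly mat" where
  "P_mat_reduced f k = mat (k+1) (k+1) (\<lambda>(r, j).
      if r = 0 then P_poly f j else if j = r - 1 then 1 else 0)"

lemma shifted_convolution_coeff_D:
  fixes f :: "'a::field fps"
  assumes f0: "fps_nth f 0 = 1" and r: "1 \<le> r" and jk: "j \<le> k"
  shows "(\<Sum>i<k+1. if r - 1 \<le> i \<and> i \<le> j then fps_nth f (i + 1 - r) * D f (j - i) else 0)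
     = (if j = r - 1 then 1 else 0)" (is "?L = _")
proof (cases "j < r - 1")
  case True
  then have "?L = 0" by (intro sum.neutral) auto
  with True show ?thesis by simp
next
  case False
  define s where "s = r - 1"
  define n where "n = j - s"
  have js: "j = n + s" using False unfolding n_def s_def by simp
  have "?L = (\<Sum>i\<in>{..<k+1} \<inter> {s..j}. fps_nth f (i + 1 - r) * D f (j - i))"
    unfolding sum.inter_restrict[OF finite_lessThan] s_def by (intro sum.cong) auto
  also have "{..<k+1} \<inter> {s..j} = {0+s..n+s}" using jk js by auto
  also have "(\<Sum>i\<in>{0+s..n+s}. fps_nth f (i + 1 - r) * D f (j - i))
      = (\<Sum>i\<in>{0..n}. fps_nth f (i + s + 1 - r) * D f (j - (i + s)))"
    by (rule sum.shift_bounds_cl_nat_ivl)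
  also have "\<dots> = (\<Sum>i\<le>n. fps_nth f i * D f (n - i))"
    using r js unfolding s_def atLeast0AtMost by (intro sum.cong) auto
  also have "\<dots> = (if n = 0 then 1 else 0)" by (rule convolution_coeff_D[OF f0])
  finally show ?thesis using js s_def False by auto
qed

lemma P_mat_mult_D_mat:
  fixes f :: "'a::field fps"
  assumes f0: "fps_nth f 0 = 1"
  shows "P_mat f k * D_mat f k = P_mat_reduced f k"
proof (rule eq_matI)
  fix r j assume "r < dim_row (P_mat_reduced f k)" "j < dim_col (P_mat_reduced f k)"
  then have rk: "r < k+1" and jk: "j < k+1" by (auto simp: P_mat_reduced_def)
  have prod: "(P_mat f k * D_mat f k) $$ (r, j)
      = (\<Sum>i<k+1. P_mat f k $$ (r, i) * D_mat f k $$ (i, j))"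
    using rk jk by (simp add: P_mat_def D_mat_def scalar_prod_def lessThan_atLeast0)
  show "(P_mat f k * D_mat f k) $$ (r, j) = P_mat_reduced f k $$ (r, j)"
  proof (cases "r = 0")
    case True
    have "(\<Sum>i<k+1. P_mat f k $$ (r, i) * D_mat f k $$ (i, j))
        = (\<Sum>i\<in>{..<k+1} \<inter> {..j}. monom (fps_nth f i * D f (j - i)) i)"
      unfolding sum.inter_restrict[OF finite_lessThan] using True jk
      by (intro sum.cong) (auto simp: P_mat_def D_mat_def mult_monom simp flip: monom_0)
    also have "{..<k+1} \<inter> {..j} = {..j}" using jk by auto
    finally show ?thesis using prod True rk jk by (simp add: P_mat_reduced_def P_poly_def)
  next
    case False
    have "(\<Sum>i<k+1. P_mat f k $$ (r, i) * D_mat f k $$ (i, j))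
        = (\<Sum>i<k+1. [:if r - 1 \<le> i \<and> i \<le> j then fps_nth f (i + 1 - r) * D f (j - i) else 0:])"
      using False rk jk by (intro sum.cong) (auto simp: P_mat_def D_mat_def)
    also have "\<dots> = [:if j = r - 1 then 1 else 0:]"
      using shifted_convolution_coeff_D[OF f0, of r j k] False jk by (simp flip: monom_0 monom_sum)
    finally show ?thesis using prod False rk jk by (simp add: P_mat_reduced_def one_pCons)
  qed
qed (auto simp: P_mat_reduced_def P_mat_def D_mat_def)

lemma P_mat_carrier: "P_mat f k \<in> carrier_mat (k+1) (k+1)"
  by (simp add: P_mat_def)

lemma D_mat_carrier: "D_mat f k \<in> carrier_mat (k+1) (k+1)"
  by (simp add: D_mat_def)

lemma det_D_mat:
  assumes "fps_nth f 0 = 1"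
  shows "det (D_mat f k) = 1"
proof -
  have "upper_triangular (D_mat f k)" unfolding upper_triangular_def D_mat_def by auto
  then have "det (D_mat f k) = prod_list (diag_mat (D_mat f k))"
    using D_mat_carrier by (rule det_upper_triangular)
  also have "\<dots> = 1" unfolding prod_list_diag_prod using D_0[OF assms]
    by (simp add: D_mat_def flip: one_pCons)
  finally show ?thesis .
qed

lemma det_P_mat_reduced: "det (P_mat_reduced f k) = (-1)^k * P_poly f k"
proof -
  let ?N = "P_mat_reduced f k"
  have "mat_delete ?N 0 k = 1\<^sub>m k"
    by (rule eq_matI) (auto simp: mat_delete_def P_mat_reduced_def)
  then have top: "?N $$ (0, k) * cofactor ?N 0 k = P_poly f k * (-1)^k"
    unfolding cofactor_def by (simp add: P_mat_reduced_def)
  have "det ?N = (\<Sum>i<Suc k. ?N $$ (i, k) * cofactor ?N i k)"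
    using laplace_expansion_column[of ?N "k+1" k] by (simp add: P_mat_reduced_def)
  also have "\<dots> = ?N $$ (0, k) * cofactor ?N 0 k + (\<Sum>i<k. ?N $$ (Suc i, k) * cofactor ?N (Suc i) k)"
    by (rule sum.lessThan_Suc_shift)
  also have "(\<Sum>i<k. ?N $$ (Suc i, k) * cofactor ?N (Suc i) k) = 0"
    by (intro sum.neutral) (auto simp: P_mat_reduced_def)
  finally show ?thesis using top by simp
qed

lemma P_eq_P_poly:
  fixes f :: "'a::field fps"
  assumes f0: "fps_nth f 0 = 1"
  shows "P f k = P_poly f k"
proof (cases "k = 0")
  case True
  then show ?thesis using f0 D_0[OF f0] by (simp add: P_def P_poly_def monom_0 one_pCons)
next
  case False
  have "det (P_mat f k) = det (P_mat f k * D_mat f k)"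
    using det_mult[OF P_mat_carrier D_mat_carrier, of f k f] det_D_mat[OF f0, of k] by simp
  also have "\<dots> = (-1)^k * P_poly f k"
    by (simp add: P_mat_mult_D_mat[OF f0] det_P_mat_reduced)
  finally have "P f k = ((-1)^k * (-1)^k) * P_poly f k" using False by (simp add: P_def)
  also have "(-1)^k * (-1)^k = (1 :: 'a poly)" by (simp flip: power_add)
  finally show ?thesis by simp
qed

lemma
  assumes "algebra_map \<phi>"
  shows algebra_map_1: "\<phi> 1 = 1"
    and algebra_map_add: "\<phi> (a + b) = \<phi> a + \<phi> b"
    and algebra_map_mult: "\<phi> (a * b) = \<phi> a * \<phi> b"
    and algebra_map_commute: "\<phi> a * z = z * \<phi> a"
  using assms unfolding algebra_map_def by blast+

lemma algebra_map_0: "algebra_map \<phi> \<Longrightarrow> \<phi> 0 = 0"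
  using algebra_map_add[of \<phi> 0 0] by simp

lemma algebra_map_sum: "algebra_map \<phi> \<Longrightarrow> \<phi> (\<Sum>i\<in>A. g i) = (\<Sum>i\<in>A. \<phi> (g i))"
  by (induction A rule: infinite_finite_induct) (simp_all add: algebra_map_0 algebra_map_add)

lemma subst_fps_mult_const_mult:
  assumes am: "algebra_map \<phi>"
  shows "subst_fps \<phi> g x * fps_const y * subst_fps \<phi> h x
    = Abs_fps (\<lambda>k. \<Sum>i\<le>k. \<phi> (fps_nth g i * fps_nth h (k - i)) * x ^ i * y * x ^ (k - i))"
proof (rule fps_ext)
  fix n
  have "\<phi> a * x ^ i * y * (\<phi> b * x ^ j) = \<phi> (a * b) * x ^ i * y * x ^ j" for a b i j
  proof -
    have "\<phi> a * x ^ i * y * (\<phi> b * x ^ j) = \<phi> a * (x ^ i * y * \<phi> b) * x ^ j"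
      by (simp add: mult.assoc)
    also have "\<dots> = \<phi> a * (\<phi> b * (x ^ i * y)) * x ^ j"
      by (simp only: algebra_map_commute[OF am])
    finally show ?thesis by (simp add: algebra_map_mult[OF am] mult.assoc)
  qed
  then show "fps_nth (subst_fps \<phi> g x * fps_const y * subst_fps \<phi> h x) n
      = fps_nth (Abs_fps (\<lambda>k. \<Sum>i\<le>k. \<phi> (fps_nth g i * fps_nth h (k - i)) * x ^ i * y * x ^ (k - i))) n"
    unfolding fps_mult_nth[of "subst_fps \<phi> g x * fps_const y"] fps_mult_right_const_nth
    by (simp add: subst_fps_def atLeast0AtMost)
qed

lemma subst_fps_mult:
  assumes am: "algebra_map \<phi>"
  shows "subst_fps \<phi> (g * h) x = subst_fps \<phi> g x * subst_fps \<phi> h x"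
proof -
  have "subst_fps \<phi> (g * h) x
      = Abs_fps (\<lambda>k. \<Sum>i\<le>k. \<phi> (fps_nth g i * fps_nth h (k - i)) * x ^ i * 1 * x ^ (k - i))"
  proof (rule fps_ext)
    fix k
    have "x ^ i * x ^ (k - i) = x ^ k" if "i \<in> {..k}" for i
      using that by (simp flip: power_add)
    then show "fps_nth (subst_fps \<phi> (g * h) x) k = fps_nth (Abs_fps (\<lambda>k.
        \<Sum>i\<le>k. \<phi> (fps_nth g i * fps_nth h (k - i)) * x ^ i * 1 * x ^ (k - i))) k"
      by (simp add: subst_fps_def fps_mult_nth atLeast0AtMost algebra_map_sum[OF am]
          sum_distrib_right mult.assoc)
  qed
  then show ?thesis using subst_fps_mult_const_mult[OF am, of g x 1 h] by simp
qed

lemma subst_fps_1: "algebra_map \<phi> \<Longrightarrow> subst_fps \<phi> 1 x = 1"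
  by (rule fps_ext) (simp add: subst_fps_def algebra_map_1 algebra_map_0)

lemma subst_fps_inverse:
  fixes f :: "'a::field fps"
  assumes am: "algebra_map \<phi>" and "fps_nth f 0 \<noteq> 0"
  shows "subst_fps \<phi> f x * subst_fps \<phi> (inverse f) x = 1"
    and "subst_fps \<phi> (inverse f) x * subst_fps \<phi> f x = 1"
  using assms(2) by (simp_all add: inverse_mult_eq_1 inverse_mult_eq_1' subst_fps_1[OF am]
      flip: subst_fps_mult[OF am])

theorem proposition2p3:
  fixes f :: "'a::field fps"
  assumes "fps_nth f 0 = 1"
  shows "(\<forall>k. P f k = (\<Sum>j\<le>k. monom (fps_nth f j * D f (k - j)) j))
    \<and> (\<forall>(\<phi> :: 'a \<Rightarrow> 'b::ring_1) x y. algebra_map \<phi> \<longrightarrow>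
         (let F = subst_fps \<phi> f x;
              Z = Abs_fps (\<lambda>k. if k = 0 then y
                    else (\<Sum>i\<le>k. \<phi> (fps_nth f i * D f (k - i)) * x ^ i * y * x ^ (k - i)))
          in (\<exists>G. F * G = 1 \<and> G * F = 1)
             \<and> (\<forall>G. F * G = 1 \<and> G * F = 1 \<longrightarrow> F * fps_const y * G = Z)))"
proof (intro conjI allI impI)
  show "P f k = (\<Sum>j\<le>k. monom (fps_nth f j * D f (k - j)) j)" for k
    using P_eq_P_poly[OF assms] by (simp add: P_poly_def)
next
  fix \<phi> :: "'a \<Rightarrow> 'b::ring_1" and x y
  assume am: "algebra_map \<phi>"
  define F where "F = subst_fps \<phi> f x"
  define G0 where "G0 = subst_fps \<phi> (inverse f) x"
  have G0: "F * G0 = 1" "G0 * F = 1"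
    using subst_fps_inverse[OF am] assms by (simp_all add: F_def G0_def)
  have "G = G0" if "G * F = 1" for G
    using that G0 by (metis mult.assoc mult_1_left mult_1_right)
  moreover have "F * fps_const y * G0 = Abs_fps (\<lambda>k. if k = 0 then y
      else (\<Sum>i\<le>k. \<phi> (fps_nth f i * D f (k - i)) * x ^ i * y * x ^ (k - i)))"
    using assms unfolding F_def G0_def subst_fps_mult_const_mult[OF am]
    by (intro fps_ext) (simp add: D_def algebra_map_1[OF am])
  ultimately show "let F = subst_fps \<phi> f x;
      Z = Abs_fps (\<lambda>k. if k = 0 then y
            else (\<Sum>i\<le>k. \<phi> (fps_nth f i * D f (k - i)) * x ^ i * y * x ^ (k - i)))
    in (\<exists>G. F * G = 1 \<and> G * F = 1) \<and> (\<forall>G. F * G = 1 \<and> G * F = 1 \<longrightarrow> F * fps_const y * G = Z)"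
    using G0 unfolding Let_def F_def by blast
qed

end
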